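(* Let $p_1,p_2,q_1,q_2\in\mathbb C\setminus\{0\}$, and suppose the multiplicative subgroup of $\mathbb C^*$ generated by $p_1$ and $p_2$ is dense in $\mathbb C$. If $f\colon\mathbb C\to\mathbb C$ is a homeomorphism with $f(p_rw)=q_rf(w)$ for all $w\in\mathbb C$, $r=1,2$, then there exist $\gamma\in\mathbb C$ and $\alpha\in\mathbb C$ with $\operatorname{Re}\alpha>-1$ such that either $f(w)=\gamma w|w|^{\alpha}$ for all $w\in\mathbb C$, or $f(w)=\gamma\overline{w}|w|^{\alpha}$ for all $w\in\mathbb C$ (with $f(0)=0$).
   Context: For $w\neq0$ and complex $\alpha$, $|w|^\alpha=e^{\alpha\ln|w|}$. *)

theory Defs
  imports "HOL-Analysis.Analysis"
begin

text \<open>The multiplicative subgroup of the nonzero complex numbers generated by p1 and p2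
  (abelian, so it consists of all products p1^m p2^n with integers m, n).\<close>
definition mult_subgroup2 :: "complex \<Rightarrow> complex \<Rightarrow> complex set" where
  "mult_subgroup2 p1 p2 = {p1 powi m * p2 powi n | m n :: int. True}"

definition abs_cpow :: "complex \<Rightarrow> complex \<Rightarrow> complex" where
  "abs_cpow w \<alpha> = exp (\<alpha> * complex_of_real (ln (cmod w)))"

end

theory Submission
  imports Defs
begin

text \<open>
  Normalise \<open>h = f / f 1\<close>.  The functional equations give
  \<open>f (z * w) = c\<^sub>z * f w\<close> for every \<open>z\<close> in the group generated by \<open>p1, p2\<close>;
  since this group is dense and \<open>f\<close> is continuous, \<open>h\<close> is multiplicative on all
  of \<open>\<complex>\<close>, and injectivity gives \<open>h 0 = 0\<close>.  A continuous multiplicative map that vanishes only at \<open>0\<close> lifts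
  along \<open>exp\<close>: \<open>h (exp z) = exp (L z)\<close> with \<open>L\<close> continuous and additive, hence
  real-linear, so \<open>L z = Re z \<cdot> a + Im z \<cdot> i k\<close> with \<open>k\<close> an integer
  (because \<open>exp (2\<pi>i) = 1\<close>).  Injectivity of \<open>h\<close> forces \<open>k = \<plusminus>1\<close> and
  continuity at \<open>0\<close> forces \<open>Re a > 0\<close>; writing \<open>w = exp (Ln w)\<close> turns this
  into \<open>h w = w |w|^(a-1)\<close> or \<open>h w = conj w |w|^(a-1)\<close>.
\<close>

subsection \<open>Iterating the functional equation\<close>

lemma scaling_power_nat:
  fixes f :: "'a::monoid_mult \<Rightarrow> 'b::monoid_mult"
  assumes "\<forall>w. f (p * w) = q * f w"
  shows "f (p ^ n * w) = q ^ n * f w"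
proof (induction n arbitrary: w)
  case 0
  then show ?case by simp
next
  case (Suc n)
  have "f (p ^ Suc n * w) = q * f (p ^ n * w)"
    using assms by (simp add: mult.assoc)
  then show ?case using Suc by (simp add: mult.assoc)
qed

lemma scaling_power_int:
  fixes f :: "'a::field \<Rightarrow> 'b::field"
  assumes "p \<noteq> 0" "q \<noteq> 0" "\<forall>w. f (p * w) = q * f w"
  shows "f (p powi m * w) = q powi m * f w"
proof (cases "m \<ge> 0")
  case True
  then obtain n where "m = int n" by (metis nonneg_eq_int)
  then show ?thesis using scaling_power_nat[OF assms(3)] by (simp add: power_int_of_nat)
next
  case False
  then obtain n where m: "m = - int n" by (metis minus_minus nonneg_eq_int neg_0_le_iff_le le_cases)
  have "f w = f (p ^ n * (inverse (p ^ n) * w))"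
    using assms(1) by (simp add: mult.assoc[symmetric])
  also have "\<dots> = q ^ n * f (inverse (p ^ n) * w)"
    by (rule scaling_power_nat[OF assms(3)])
  finally have "f (inverse (p ^ n) * w) = inverse (q ^ n) * f w"
    using assms(2) by (simp add: field_simps)
  then show ?thesis using m by (simp add: power_int_minus power_int_of_nat)
qed

lemma scaling_on_mult_subgroup2:
  fixes f :: "complex \<Rightarrow> complex"
  assumes "p1 \<noteq> 0" "p2 \<noteq> 0" "q1 \<noteq> 0" "q2 \<noteq> 0"
    and "\<forall>w. f (p1 * w) = q1 * f w" "\<forall>w. f (p2 * w) = q2 * f w"
    and "z \<in> mult_subgroup2 p1 p2"
  shows "\<exists>c. \<forall>w. f (z * w) = c * f w"
proof -
  obtain m n where z: "z = p1 powi m * p2 powi n"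
    using assms(7) unfolding mult_subgroup2_def by auto
  have "f (z * w) = q1 powi m * q2 powi n * f w" for w
    unfolding z using scaling_power_int[OF assms(1,3,5), of m] scaling_power_int[OF assms(2,4,6), of n]
    by (simp add: mult.assoc)
  then show ?thesis by blast
qed

subsection \<open>Multiplicativity by density\<close>

text \<open>If a continuous \<open>f\<close> is scaled by each element of a dense set \<open>S\<close>, then
  \<open>f (z w) f 1 = f z f w\<close> for all \<open>z, w\<close>: the identity holds for \<open>z \<in> S\<close>
  (put \<open>w = 1\<close> to identify the scaling factor) and is closed in \<open>z\<close>.\<close>

lemma multiplicative_of_dense_scalings:
  fixes f :: "'a::real_normed_field \<Rightarrow> 'b::real_normed_field"
  assumes cont: "continuous_on UNIV f" and dense: "closure S = UNIV"
    and scal: "\<And>z. z \<in> S \<Longrightarrow> \<exists>c. \<forall>w. f (z * w) = c * f w"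
  shows "f (z * w) * f 1 = f z * f w"
proof -
  have "continuous_on UNIV (\<lambda>z. f (z * w))"
    by (rule continuous_on_compose2[OF cont]) (auto intro!: continuous_intros)
  then have "closed {z. f (z * w) * f 1 = f z * f w}"
    by (intro closed_Collect_eq) (auto intro!: continuous_intros cont)
  moreover have "S \<subseteq> {z. f (z * w) * f 1 = f z * f w}"
  proof
    fix z assume "z \<in> S"
    then obtain c where c: "\<forall>w. f (z * w) = c * f w" using scal by blast
    then show "z \<in> {z. f (z * w) * f 1 = f z * f w}" using c[rule_format, of 1] by simp
  qed
  ultimately have "closure S \<subseteq> {z. f (z * w) * f 1 = f z * f w}"
    by (rule closure_minimal[rotated])
  then show ?thesis using dense by auto
qed

subsection \<open>Continuous additive maps are real-linear\<close>

text \<open>Cauchy's functional equation: additivity gives homogeneity over \<open>\<rat>\<close>,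
  and continuity extends it to \<open>\<real>\<close> because \<open>\<rat>\<close> is dense.\<close>

lemma additive_continuous_imp_linear:
  fixes L :: "'a::real_normed_vector \<Rightarrow> 'b::real_normed_vector"
  assumes add: "\<And>x y. L (x + y) = L x + L y" and cont: "continuous_on UNIV L"
  shows "linear L"
proof -
  have L0: "L 0 = 0" using add[of 0 0] by simp
  have Lneg: "L (- x) = - L x" for x
    using add[of x "- x"] L0 by (simp add: add_eq_0_iff)
  have Lnat: "L (real n *\<^sub>R x) = real n *\<^sub>R L x" for n x
    by (induction n) (simp_all add: L0 add scaleR_add_left)
  have Lint: "L (real_of_int m *\<^sub>R x) = real_of_int m *\<^sub>R L x" for m x
  proof (cases "m \<ge> 0")
    case True
    then show ?thesis using Lnat[of "nat m" x] by simp
  next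
    case False
    then have m: "real_of_int m = - real (nat (- m))" by simp
    have "L (real_of_int m *\<^sub>R x) = L (- (real (nat (- m)) *\<^sub>R x))" by (simp add: m)
    also have "\<dots> = real_of_int m *\<^sub>R L x" by (simp add: Lneg Lnat m)
    finally show ?thesis .
  qed
  have Lrat: "L (r *\<^sub>R x) = r *\<^sub>R L x" if "r \<in> \<rat>" for r x
  proof -
    from that obtain a b where ab: "r = of_int a / of_int b" "b \<noteq> 0"
      by (rule Rats_cases') auto
    have "real_of_int b *\<^sub>R L (r *\<^sub>R x) = L (real_of_int b *\<^sub>R r *\<^sub>R x)"
      by (rule Lint[symmetric])
    also have "real_of_int b *\<^sub>R r *\<^sub>R x = real_of_int a *\<^sub>R x" using ab by simp
    finally have b_times: "real_of_int b *\<^sub>R L (r *\<^sub>R x) = real_of_int a *\<^sub>R L x"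
      by (simp add: Lint)
    have "L (r *\<^sub>R x) = (1 / real_of_int b) *\<^sub>R (real_of_int b *\<^sub>R L (r *\<^sub>R x))"
      using ab(2) by simp
    then show ?thesis unfolding b_times using ab(1) by simp
  qed
  have "L (r *\<^sub>R x) = r *\<^sub>R L x" for r x
  proof -
    have "continuous_on UNIV (\<lambda>r. L (r *\<^sub>R x))"
      by (rule continuous_on_compose2[OF cont]) (auto intro!: continuous_intros)
    then have "closed {r. L (r *\<^sub>R x) = r *\<^sub>R L x}"
      by (intro closed_Collect_eq) (auto intro!: continuous_intros)
    moreover have "\<rat> \<subseteq> {r. L (r *\<^sub>R x) = r *\<^sub>R L x}" using Lrat by auto
    ultimately have "closure \<rat> \<subseteq> {r. L (r *\<^sub>R x) = r *\<^sub>R L x}"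
      by (rule closure_minimal[rotated])
    then show ?thesis by (auto simp: Rats_closure_real)
  qed
  then show ?thesis using add by (simp add: linear_iff)
qed

subsection \<open>Lifting multiplicative maps along the exponential\<close>

text \<open>The nonzero solutions of \<open>exp z = 1\<close> are the points \<open>2\<pi>i n\<close>, \<open>n \<noteq> 0\<close>,
  so they stay at distance at least \<open>2\<pi>\<close> from \<open>0\<close>.\<close>

lemma exp_eq_1_norm_ge:
  fixes z :: complex
  assumes "exp z = 1" "z \<noteq> 0"
  shows "2 * pi \<le> norm z"
proof -
  obtain n :: int where n: "Re z = 0" "Im z = of_int (2 * n) * pi"
    using assms(1) unfolding exp_eq_1 by blast
  then have "n \<noteq> 0" using assms(2) by (auto simp: complex_eq_iff)
  then have "2 * pi \<le> 2 * \<bar>real_of_int n\<bar> * pi" by (simp add: pi_gt_zero)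
  also have "\<dots> = \<bar>Im z\<bar>" using n by (simp add: abs_mult)
  also have "\<dots> \<le> norm z" by (rule abs_Im_le_cmod)
  finally show ?thesis .
qed

text \<open>Consequently a continuous function on a connected set whose exponential
  is constantly \<open>1\<close> takes values in a discrete set, hence is constant.\<close>

lemma continuous_exp_eq_1_imp_constant:
  fixes D :: "'a::topological_space \<Rightarrow> complex"
  assumes "connected S" "continuous_on S D" "\<And>x. x \<in> S \<Longrightarrow> exp (D x) = 1"
  shows "D constant_on S"
proof (rule continuous_discrete_range_constant[OF assms(1,2)])
  fix x assume "x \<in> S"
  show "\<exists>e>0. \<forall>y. y \<in> S \<and> D y \<noteq> D x \<longrightarrow> e \<le> norm (D y - D x)"
  proof (intro exI[of _ "2 * pi"] conjI allI impI)
    fix y assume y: "y \<in> S \<and> D y \<noteq> D x"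
    have "exp (D y - D x) = 1" using assms(3) \<open>x \<in> S\<close> y by (simp add: exp_diff)
    then show "2 * pi \<le> norm (D y - D x)" using y by (intro exp_eq_1_norm_ge) auto
  qed (simp add: pi_gt_zero)
qed

text \<open>A continuous logarithm of \<open>h \<circ> exp\<close> exists since \<open>\<complex>\<close> is contractible; it is
  additive up to a constant in \<open>2\<pi>i\<int>\<close>, which vanishes after normalising \<open>L 0 = 0\<close>.\<close>

lemma multiplicative_exp_lift:
  fixes h :: "complex \<Rightarrow> complex"
  assumes cont: "continuous_on UNIV h" and mult: "\<And>z w. h (z * w) = h z * h w"
    and one: "h 1 = 1" and nonzero: "\<And>z. z \<noteq> 0 \<Longrightarrow> h z \<noteq> 0"
  obtains L where "linear L" "\<And>z. h (exp z) = exp (L z)"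
proof -
  have "continuous_on UNIV (\<lambda>z. h (exp z))"
    by (rule continuous_on_compose2[OF cont]) (auto intro!: continuous_intros)
  then obtain L0 where L0_cont: "continuous_on UNIV L0" and L0_exp: "\<And>z. h (exp z) = exp (L0 z)"
    using continuous_logarithm_on_contractible[of UNIV "\<lambda>z. h (exp z)"] nonzero by auto
  define L where "L z = L0 z - L0 0" for z
  have L_exp: "h (exp z) = exp (L z)" for z
    using L0_exp[of z] L0_exp[of 0] one by (simp add: L_def exp_diff)
  have L_cont: "continuous_on UNIV L"
    unfolding L_def by (auto intro!: continuous_intros L0_cont)
  have L_add: "L (z + w) = L z + L w" for z w
  proof -
    define D where "D x = L (x + w) - L x - L w" for x
    have "exp (D x) = 1" for x
      using L_exp[of "x + w"] L_exp[of x] L_exp[of w] mult[of "exp x" "exp w"]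
      by (simp add: D_def exp_diff exp_add)
    moreover have "continuous_on UNIV D"
      unfolding D_def by (auto intro!: continuous_intros L_cont continuous_on_compose2[OF L_cont])
    ultimately have "D constant_on UNIV"
      by (intro continuous_exp_eq_1_imp_constant) auto
    then have "D z = D 0" unfolding constant_on_def by auto
    then show ?thesis by (simp add: D_def L_def algebra_simps)
  qed
  show ?thesis
    by (rule that[OF additive_continuous_imp_linear[OF L_add L_cont] L_exp])
qed

text \<open>Explicitly, \<open>L z = Re z \<cdot> a + Im z \<cdot> i k\<close>: since \<open>exp (L (2\<pi>i)) = h 1 = 1\<close>,
  the value \<open>L i\<close> is an integer multiple of \<open>i\<close>.\<close>

lemma multiplicative_exp_form:
  fixes h :: "complex \<Rightarrow> complex"
  assumes "continuous_on UNIV h" "\<And>z w. h (z * w) = h z * h w"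
    and one: "h 1 = 1" and "\<And>z. z \<noteq> 0 \<Longrightarrow> h z \<noteq> 0"
  obtains a :: complex and k :: int
  where "\<And>z. h (exp z) = exp (Re z *\<^sub>R a + Im z *\<^sub>R (\<i> * of_int k))"
proof -
  obtain L where lin: "linear L" and L_exp: "\<And>z. h (exp z) = exp (L z)"
    using multiplicative_exp_lift[OF assms] by blast
  have L_form: "L z = Re z *\<^sub>R L 1 + Im z *\<^sub>R L \<i>" for z
  proof -
    have "z = Re z *\<^sub>R 1 + Im z *\<^sub>R \<i>" by (simp add: complex_eq_iff)
    then show ?thesis by (metis lin linear_add linear_scale)
  qed
  have "exp ((2 * pi) *\<^sub>R L \<i>) = h (exp ((2 * pi) *\<^sub>R \<i>))"
    using L_exp linear_scale[OF lin] by metis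
  also have "\<dots> = 1" using one by (simp add: scaleR_conv_of_real)
  finally obtain n :: int
    where "Re ((2 * pi) *\<^sub>R L \<i>) = 0" "Im ((2 * pi) *\<^sub>R L \<i>) = of_int (2 * n) * pi"
    unfolding exp_eq_1 by blast
  then have "L \<i> = \<i> * of_int n" by (simp add: complex_eq_iff)
  then show ?thesis using that[of "L 1" n] L_exp L_form by metis
qed

subsection \<open>Injective continuous multiplicative maps of \<open>\<complex>\<close>\<close>

text \<open>On the unit circle \<open>h\<close> is \<open>e\<^sup>i\<^sup>t \<mapsto> e\<^sup>i\<^sup>k\<^sup>t\<close>; injectivity forces degree
  \<open>k = \<plusminus>1\<close> (\<open>k = 0\<close> identifies \<open>\<plusminus>1\<close>, and \<open>|k| > 1\<close> identifies \<open>e\<^sup>2\<^sup>\<pi>\<^sup>i\<^sup>/\<^sup>k\<close> with \<open>1\<close>).\<close>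

lemma injective_circle_degree:
  fixes h :: "complex \<Rightarrow> complex"
  assumes inj: "inj h" and one: "h 1 = 1"
    and circle: "\<And>t. h (exp (t *\<^sub>R \<i>)) = exp (t *\<^sub>R (\<i> * of_int k))"
  shows "k = 1 \<or> k = -1"
proof -
  have "k \<noteq> 0"
  proof
    assume "k = 0"
    then have "h (exp (pi *\<^sub>R \<i>)) = h 1" using circle one by simp
    moreover have "exp (pi *\<^sub>R \<i>) = -1" by (simp add: scaleR_conv_of_real)
    ultimately show False using inj by (fastforce dest: injD)
  qed
  have "(2 * pi / k) *\<^sub>R (\<i> * of_int k) = 2 * of_real pi * \<i>"
    using \<open>k \<noteq> 0\<close> by (simp add: scaleR_conv_of_real)
  then have "h (exp ((2 * pi / k) *\<^sub>R \<i>)) = 1" using circle[of "2 * pi / k"] by simp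
  then have "exp ((2 * pi / k) *\<^sub>R \<i>) = 1" using inj one by (simp add: injD)
  then obtain n :: int where "2 * pi / k = 2 * n * pi"
    unfolding exp_eq_1 by auto
  then have "real_of_int (k * n) = 1" using \<open>k \<noteq> 0\<close> pi_gt_zero by (simp add: field_simps)
  then have "k * n = 1" by linarith
  then show ?thesis by (auto simp: zmult_eq_1_iff)
qed

text \<open>On the positive axis \<open>h t = t\<^sup>a\<close>; continuity at \<open>0\<close> with \<open>h 0 = 0\<close> forces
  \<open>|t\<^sup>a| = t\<^bsup>Re a\<^esup> \<rightarrow> 0\<close>, i.e. \<open>Re a > 0\<close>.\<close>

lemma continuous_at_0_radial_exponent:
  fixes h :: "complex \<Rightarrow> complex"
  assumes cont: "continuous_on UNIV h" and zero: "h 0 = 0"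
    and radial: "\<And>t. t > 0 \<Longrightarrow> h (of_real t) = exp (ln t *\<^sub>R a)"
  shows "Re a > 0"
proof (rule ccontr)
  assume "\<not> Re a > 0"
  obtain d where d: "d > 0" "\<And>x. dist x 0 < d \<Longrightarrow> dist (h x) (h 0) < 1"
    using cont unfolding continuous_on_iff by (meson UNIV_I zero_less_one)
  define t where "t = min (d / 2) (1 / 2)"
  have t: "0 < t" "t < 1" "t < d" using d by (auto simp: t_def)
  have "norm (h (of_real t)) < 1" using d(2)[of "of_real t"] t zero by (simp add: dist_norm)
  moreover have "ln t * Re a \<ge> 0" using t \<open>\<not> Re a > 0\<close> by (simp add: mult_nonpos_nonpos)
  ultimately show False using radial[OF t(1)] by (simp add: norm_exp_eq_Re)
qed

text \<open>Conversion to the notation \<open>|w|^\<alpha>\<close> of the theorem: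
  \<open>w = exp (ln |w| + i arg w)\<close> and \<open>conj w = exp (ln |w| - i arg w)\<close>.\<close>

lemma exp_polar_abs_cpow:
  assumes "w \<noteq> 0"
  shows "exp (ln (cmod w) *\<^sub>R a + Im (Ln w) *\<^sub>R \<i>) = w * abs_cpow w (a - 1)"
    and "exp (ln (cmod w) *\<^sub>R a + Im (Ln w) *\<^sub>R (- \<i>)) = cnj w * abs_cpow w (a - 1)"
proof -
  define l \<theta> where "l = ln (cmod w)" and "\<theta> = Im (Ln w)"
  have w: "w = exp (of_real l + \<i> * of_real \<theta>)"
    using assms unfolding l_def \<theta>_def by (metis complex_eq Re_Ln exp_Ln)
  then have cnj_w: "cnj w = exp (of_real l - \<i> * of_real \<theta>)"
    by (simp add: exp_cnj)
  have abs: "abs_cpow w (a - 1) = exp ((a - 1) * of_real l)"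
    by (simp add: abs_cpow_def l_def)
  have "w * abs_cpow w (a - 1) = exp (of_real l + \<i> * of_real \<theta> + (a - 1) * of_real l)"
    by (subst (1) w) (simp add: abs exp_add)
  then show "exp (l *\<^sub>R a + \<theta> *\<^sub>R \<i>) = w * abs_cpow w (a - 1)"
    by (simp add: scaleR_conv_of_real algebra_simps)
  have "cnj w * abs_cpow w (a - 1) = exp (of_real l - \<i> * of_real \<theta> + (a - 1) * of_real l)"
    by (simp add: cnj_w abs exp_add exp_diff)
  then show "exp (l *\<^sub>R a + \<theta> *\<^sub>R (- \<i>)) = cnj w * abs_cpow w (a - 1)"
    by (simp add: scaleR_conv_of_real algebra_simps)
qed

lemma injective_multiplicative_form:
  fixes h :: "complex \<Rightarrow> complex"
  assumes cont: "continuous_on UNIV h" and inj: "inj h"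
    and mult: "\<And>z w. h (z * w) = h z * h w" and one: "h 1 = 1" and zero: "h 0 = 0"
  shows "\<exists>\<alpha>. Re \<alpha> > -1 \<and> ((\<forall>w. w \<noteq> 0 \<longrightarrow> h w = w * abs_cpow w \<alpha>) \<or>
                          (\<forall>w. w \<noteq> 0 \<longrightarrow> h w = cnj w * abs_cpow w \<alpha>))"
proof -
  have nonzero: "h z \<noteq> 0" if "z \<noteq> 0" for z
    using that inj zero by (metis injD)
  obtain a and k :: int where form: "\<And>z. h (exp z) = exp (Re z *\<^sub>R a + Im z *\<^sub>R (\<i> * of_int k))"
    using multiplicative_exp_form[OF cont mult one nonzero] by blast
  have polar: "h w = exp (ln (cmod w) *\<^sub>R a + Im (Ln w) *\<^sub>R (\<i> * of_int k))" if "w \<noteq> 0" for w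
    using form[of "Ln w"] that by simp
  have "Re a > 0"
    by (rule continuous_at_0_radial_exponent[OF cont zero]) (use polar in \<open>simp add: Ln_of_real\<close>)
  moreover have "k = 1 \<or> k = -1"
    by (rule injective_circle_degree[OF inj one]) (use form in simp)
  then have "(\<forall>w. w \<noteq> 0 \<longrightarrow> h w = w * abs_cpow w (a - 1)) \<or>
             (\<forall>w. w \<noteq> 0 \<longrightarrow> h w = cnj w * abs_cpow w (a - 1))"
    using polar exp_polar_abs_cpow[of _ a] by auto
  ultimately show ?thesis
    by (intro exI[of _ "a - 1"]) simp
qed

theorem lemma3p1:
  fixes p1 p2 q1 q2 :: complex and f :: "complex \<Rightarrow> complex"
  assumes "p1 \<noteq> 0" "p2 \<noteq> 0" "q1 \<noteq> 0" "q2 \<noteq> 0"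
    and "closure (mult_subgroup2 p1 p2) = UNIV"
    and "\<exists>g. homeomorphism UNIV UNIV f g"
    and "\<forall>w. f (p1 * w) = q1 * f w"
    and "\<forall>w. f (p2 * w) = q2 * f w"
  shows "\<exists>\<gamma> \<alpha> :: complex. Re \<alpha> > -1 \<and>
    ((\<forall>w. f w = (if w = 0 then 0 else \<gamma> * w * abs_cpow w \<alpha>)) \<or>
     (\<forall>w. f w = (if w = 0 then 0 else \<gamma> * cnj w * abs_cpow w \<alpha>)))"
proof -
  obtain g where hom: "homeomorphism UNIV UNIV f g" using assms(6) by blast
  have cont: "continuous_on UNIV f" using hom by (rule homeomorphism_cont1)
  have inj: "inj f"
    by (rule inj_on_inverseI[where g = g]) (simp add: homeomorphism_apply1[OF hom])
  have mult: "f (z * w) * f 1 = f z * f w" for z w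
    by (rule multiplicative_of_dense_scalings[OF cont assms(5) scaling_on_mult_subgroup2[OF assms(1-4,7,8)]])
  have f0: "f 0 = 0"
  proof (rule ccontr)
    assume "f 0 \<noteq> 0"
    then have "f 0 = f 1" using mult[of 0 0] by simp
    then show False using injD[OF inj, of 0 1] by simp
  qed
  define c where "c = f 1"
  have c: "c \<noteq> 0"
    using f0 injD[OF inj, of 1 0] by (auto simp: c_def)
  define h where "h z = f z / c" for z
  have h_cont: "continuous_on UNIV h"
    unfolding h_def using c by (intro continuous_on_divide cont continuous_on_const) auto
  have h_inj: "inj h"
    unfolding h_def using c by (intro injI) (auto dest: injD[OF inj])
  have h_mult: "h (z * w) = h z * h w" for z w
    using mult[of z w] c unfolding h_def c_def by (simp add: field_simps)
  have h_one: "h 1 = 1" and h_zero: "h 0 = 0"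
    using f0 c unfolding h_def c_def by simp_all
  obtain \<alpha> where Re_\<alpha>: "Re \<alpha> > -1"
    and h_form: "(\<forall>w. w \<noteq> 0 \<longrightarrow> h w = w * abs_cpow w \<alpha>) \<or>
                 (\<forall>w. w \<noteq> 0 \<longrightarrow> h w = cnj w * abs_cpow w \<alpha>)"
    using injective_multiplicative_form[OF h_cont h_inj h_mult h_one h_zero] by blast
  have f_h: "f w = (if w = 0 then 0 else c * h w)" for w
    using f0 c by (simp add: h_def)
  from h_form have "(\<forall>w. f w = (if w = 0 then 0 else c * w * abs_cpow w \<alpha>)) \<or>
                    (\<forall>w. f w = (if w = 0 then 0 else c * cnj w * abs_cpow w \<alpha>))"
    unfolding f_h by (auto simp: mult.assoc)
  with Re_\<alpha> show ?thesis by blast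
qed

end
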